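(* Let $G$ be the group of orientation preserving affinities of $\mathbb R^2$ (realized as $3\times 3$ matrices with Lie algebra basis $e_1=E_{22}$, $e_2=E_{23}$, $e_3=E_{32}$, $e_4=E_{33}$, $e_5=E_{12}$, $e_6=E_{13}$), and $H$ the connected subgroup with Lie algebra $\langle e_1,e_4,e_5\rangle$. There is no global almost differentiable left A-loop with $G$ as group topologically generated by its left translations, $H$ as stabilizer of the identity, and $T_1\sigma(G/H)=\langle e_2,e_3,e_6\rangle$.
   Context: $E_{ij}$ denotes the $3\times3$ matrix unit. A loop is a set with a binary operation and two-sided identity $e$ with uniquely solvable left and right division; a left A-loop has every $\lambda_{xy}^{-1}\lambda_x\lambda_y$ an automorphism ($\lambda_a(y)=a\cdot y$). For a connected loop, $G$ is the group topologically generated by left translations, $H$ the stabilizer of $e$, and left translations form the image of a sharply transitive global section $\sigma:G/H\to G$, $\sigma(H)=1$; almost differentiable means $G$ Lie and $\sigma$ differentiable. *)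

theory Defs
  imports "HOL-Analysis.Analysis"
begin

type_synonym mat3 = "real^3^3"

definition Eu :: "3 \<Rightarrow> 3 \<Rightarrow> mat3" where
  "Eu i j = (\<chi> a b. if a = i \<and> b = j then 1 else 0)"

text \<open>The affine matrix [[1, t1, t2], [0, A11, A12], [0, A21, A22]]
  (first row carries the translation, lower right block the linear part,
   matching the Lie algebra basis E22,E23,E32,E33,E12,E13).\<close>
definition aff :: "(real^2) \<times> (real^2^2) \<Rightarrow> mat3" where
  "aff p = (let t = fst p; A = snd p in
     (\<chi> (i::3) (j::3). if i = 1 then (if j = 1 then 1 else if j = 2 then t$(1::2) else t$(2::2))
             else if j = 1 then 0
             else if i = 2 then (if j = 2 then A$(1::2)$(1::2) else A$(1::2)$(2::2))
             else (if j = 2 then A$(2::2)$(1::2) else A$(2::2)$(2::2))))"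

definition Upar :: "((real^2) \<times> (real^2^2)) set" where
  "Upar = UNIV \<times> {A. det A > 0}"

definition Gaff :: "mat3 set" where
  "Gaff = aff ` Upar"

text \<open>The connected subgroup H with Lie algebra spanned by E22, E33, E12.\<close>
definition Hsub :: "mat3 set" where
  "Hsub = {aff (\<chi> (k::2). if k = 1 then x else 0,
                \<chi> (i::2) (j::2). if i = 1 \<and> j = 1 then a else if i = 2 \<and> j = 2 then d else 0)
           | x a d. a > 0 \<and> d > 0}"

definition lcoset :: "mat3 \<Rightarrow> mat3 set" where
  "lcoset g = (\<lambda>h. g ** h) ` Hsub"

definition cosets :: "mat3 set set" where
  "cosets = lcoset ` Gaff"

definition act :: "mat3 \<Rightarrow> mat3 set \<Rightarrow> mat3 set" where
  "act g c = (\<lambda>x. g ** x) ` c"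

inductive_set gen_grp :: "mat3 set \<Rightarrow> mat3 set" for S where
  one: "mat 1 \<in> gen_grp S"
| gen: "s \<in> S \<Longrightarrow> s \<in> gen_grp S"
| mult: "a \<in> gen_grp S \<Longrightarrow> b \<in> gen_grp S \<Longrightarrow> a ** b \<in> gen_grp S"
| inv: "a \<in> gen_grp S \<Longrightarrow> matrix_inv a \<in> gen_grp S"

definition loop_mult :: "(mat3 set \<Rightarrow> mat3) \<Rightarrow> mat3 set \<Rightarrow> mat3 set \<Rightarrow> mat3 set" where
  "loop_mult \<sigma> p q = act (\<sigma> p) q"

definition sharply_transitive_section :: "(mat3 set \<Rightarrow> mat3) \<Rightarrow> bool" where
  "sharply_transitive_section \<sigma> \<longleftrightarrow>
     \<sigma> Hsub = mat 1 \<and>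
     (\<forall>c\<in>cosets. \<sigma> c \<in> Gaff \<and> \<sigma> c \<in> c) \<and>
     (\<forall>p\<in>cosets. \<forall>q\<in>cosets. \<exists>!c. c \<in> cosets \<and> act (\<sigma> c) p = q)"

definition left_A_loop :: "(mat3 set \<Rightarrow> mat3) \<Rightarrow> bool" where
  "left_A_loop \<sigma> \<longleftrightarrow>
     (\<forall>x\<in>cosets. \<forall>y\<in>cosets.
        (let f = matrix_inv (\<sigma> (loop_mult \<sigma> x y)) ** \<sigma> x ** \<sigma> y in
         \<forall>u\<in>cosets. \<forall>v\<in>cosets.
           act f (loop_mult \<sigma> u v) = loop_mult \<sigma> (act f u) (act f v)))"

definition top_generates :: "(mat3 set \<Rightarrow> mat3) \<Rightarrow> bool" where
  "top_generates \<sigma> \<longleftrightarrow> Gaff \<subseteq> closure (gen_grp (\<sigma> ` cosets))"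

definition sec_chart :: "(mat3 set \<Rightarrow> mat3) \<Rightarrow> (real^2) \<times> (real^2^2) \<Rightarrow> mat3" where
  "sec_chart \<sigma> p = \<sigma> (lcoset (aff p))"

definition almost_differentiable :: "(mat3 set \<Rightarrow> mat3) \<Rightarrow> bool" where
  "almost_differentiable \<sigma> \<longleftrightarrow> (\<forall>p\<in>Upar. sec_chart \<sigma> differentiable (at p))"

definition tangent_at_1 :: "(mat3 set \<Rightarrow> mat3) \<Rightarrow> mat3 set" where
  "tangent_at_1 \<sigma> = range (frechet_derivative (sec_chart \<sigma>) (at (0, mat 1)))"

end

theory Submission
  imports Defs
begin

text \<open>A sharply transitive section acts without fixed points: no left translation other than
  \<open>\<sigma>(H) = 1\<close> fixes a coset \<open>kH\<close>, i.e. none is conjugate in \<open>G\<close> into \<open>H\<close>. But \<open>e\<^sub>2 + e\<^sub>3\<close>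
  is tangent to \<open>\<sigma>(G/H)\<close>, so \<open>\<sigma>\<close> contains affinities close to 1 whose linear part
  \<open>1 + \<epsilon>(E\<^sub>2\<^sub>3 + E\<^sub>3\<^sub>2) + o(\<epsilon>)\<close> has two distinct positive eigenvalues. Diagonalising the linear part
  and absorbing the translation conjugates such an affinity into \<open>H\<close>.\<close>

lemma aff_nth:
  "aff (t, A) $ i $ j =
    (if i = 1 then (if j = 1 then 1 else if j = 2 then t$1 else t$2)
     else if j = 1 then 0
     else if i = 2 then (if j = 2 then A$1$1 else A$1$2)
     else (if j = 2 then A$2$1 else A$2$2))"
  by (simp add: aff_def)

lemma aff_zero_one: "aff (0, mat 1) = mat 1"
  by (simp add: vec_eq_iff forall_3 aff_nth mat_def)

lemma mat_one_in_Gaff: "mat 1 \<in> Gaff"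
  unfolding Gaff_def Upar_def by (rule image_eqI[of _ _ "(0, mat 1)"]) (simp_all add: aff_zero_one)

definition hmat :: "real \<Rightarrow> real \<Rightarrow> real \<Rightarrow> mat3" where
  "hmat x a d = aff (\<chi> (k::2). if k = 1 then x else 0,
                     \<chi> (i::2) (j::2). if i = 1 \<and> j = 1 then a else if i = 2 \<and> j = 2 then d else 0)"

lemma Hsub_eq_hmat: "Hsub = {hmat x a d | x a d. a > 0 \<and> d > 0}"
  by (simp add: Hsub_def hmat_def)

lemma hmat_in_Hsub: "a > 0 \<Longrightarrow> d > 0 \<Longrightarrow> hmat x a d \<in> Hsub"
  unfolding Hsub_eq_hmat by blast

lemma hmat_nth:
  "hmat x a d $ i $ j =
    (if i = 1 then (if j = 1 then 1 else if j = 2 then x else 0)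
     else if j = 1 then 0
     else if i = 2 then (if j = 2 then a else 0)
     else (if j = 2 then 0 else d))"
  by (simp add: hmat_def aff_nth)

lemma hmat_mult: "hmat x a d ** hmat y b e = hmat (y + x * b) (a * b) (d * e)"
  by (simp add: vec_eq_iff forall_3 matrix_matrix_mult_def sum_3 hmat_nth)

lemma Hsub_mult_closed: "h \<in> Hsub \<Longrightarrow> h' \<in> Hsub \<Longrightarrow> h ** h' \<in> Hsub"
  unfolding Hsub_eq_hmat by (auto simp: hmat_mult) (metis mult_pos_pos)

lemma Hsub_left_divide:
  assumes "h \<in> Hsub" "h' \<in> Hsub"
  obtains h'' where "h'' \<in> Hsub" "h' = h ** h''"
proof -
  obtain x a d where h: "h = hmat x a d" "a > 0" "d > 0"
    using assms(1) unfolding Hsub_eq_hmat by blast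
  obtain y b e where h': "h' = hmat y b e" "b > 0" "e > 0"
    using assms(2) unfolding Hsub_eq_hmat by blast
  have "h' = h ** hmat (y - x * (b / a)) (b / a) (e / d)"
    using h h' by (simp add: hmat_mult)
  moreover have "hmat (y - x * (b / a)) (b / a) (e / d) \<in> Hsub"
    using h h' by (intro hmat_in_Hsub) auto
  ultimately show thesis using that by blast
qed

lemma lcoset_mult_Hsub:
  assumes "h \<in> Hsub"
  shows "lcoset (g ** h) = lcoset g"
proof
  show "lcoset (g ** h) \<subseteq> lcoset g"
    unfolding lcoset_def using Hsub_mult_closed[OF assms] by (force simp: matrix_mul_assoc)
  show "lcoset g \<subseteq> lcoset (g ** h)"
  proof
    fix z assume "z \<in> lcoset g"
    then obtain h' where "h' \<in> Hsub" "z = g ** h'"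
      unfolding lcoset_def by auto
    moreover obtain h'' where "h'' \<in> Hsub" "h' = h ** h''"
      using Hsub_left_divide[OF assms \<open>h' \<in> Hsub\<close>] by blast
    ultimately show "z \<in> lcoset (g ** h)"
      unfolding lcoset_def by (auto simp: matrix_mul_assoc)
  qed
qed

lemma lcoset_one: "lcoset (mat 1) = Hsub"
  unfolding lcoset_def by (simp add: matrix_mul_lid)

lemma Hsub_in_cosets: "Hsub \<in> cosets"
  unfolding cosets_def using mat_one_in_Gaff lcoset_one by force

lemma act_lcoset: "act s (lcoset k) = lcoset (s ** k)"
  unfolding act_def lcoset_def by (auto simp: image_image matrix_mul_assoc)

lemma section_conj_into_Hsub_is_one:
  assumes st: "sharply_transitive_section \<sigma>" and c: "c \<in> cosets"
    and k: "k \<in> Gaff" and h: "h \<in> Hsub" and conj: "\<sigma> c ** k = k ** h"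
  shows "\<sigma> c = mat 1"
proof -
  have one: "\<sigma> Hsub = mat 1"
    using st unfolding sharply_transitive_section_def by blast
  have "lcoset k \<in> cosets"
    using k unfolding cosets_def by blast
  then have unique: "\<exists>!c. c \<in> cosets \<and> act (\<sigma> c) (lcoset k) = lcoset k"
    using st unfolding sharply_transitive_section_def by blast
  have "act (\<sigma> c) (lcoset k) = lcoset k"
    using act_lcoset conj lcoset_mult_Hsub[OF h] by metis
  moreover have "act (\<sigma> Hsub) (lcoset k) = lcoset k"
    using act_lcoset one by (metis matrix_mul_lid)
  ultimately have "c = Hsub"
    using unique c Hsub_in_cosets by blast
  with one show ?thesis by simp
qed

text \<open>The translation component along the eigenvector \<open>w\<close> is removed by a translation
  along \<open>w\<close>, which needs \<open>d \<noteq> 1\<close>; the component along \<open>u\<close> is absorbed by \<open>H\<close>.\<close>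

lemma aff_conj_into_Hsub_eigenbasis:
  fixes t u w :: "real^2" and A :: "real^2^2"
  assumes u: "A *v u = a *\<^sub>R u" and w: "A *v w = d *\<^sub>R w"
    and pos: "a > 0" "d > 0" and "d \<noteq> 1" and orient: "u$1 * w$2 - w$1 * u$2 > 0"
  shows "\<exists>k\<in>Gaff. \<exists>h\<in>Hsub. aff (t, A) ** k = k ** h"
proof -
  define \<tau> where "\<tau> = (t$1 * w$1 + t$2 * w$2) / (d - 1)"
  define x where "x = t$1 * u$1 + t$2 * u$2"
  have \<tau>: "\<tau> * d = \<tau> + t$1 * w$1 + t$2 * w$2"
    using \<open>d \<noteq> 1\<close> unfolding \<tau>_def by (simp add: field_simps)
  have eigen: "A$1$1 * u$1 + A$1$2 * u$2 = a * u$1" "A$2$1 * u$1 + A$2$2 * u$2 = a * u$2"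
    "A$1$1 * w$1 + A$1$2 * w$2 = d * w$1" "A$2$1 * w$1 + A$2$2 * w$2 = d * w$2"
    using u w by (simp_all add: vec_eq_iff forall_2 matrix_vector_mult_def sum_2)
  define k where "k = aff (\<chi> i. if i = 1 then 0 else \<tau>, \<chi> i j. if j = 1 then u$i else w$i)"
  have "k \<in> Gaff"
    unfolding k_def Gaff_def Upar_def using orient by (intro imageI) (auto simp: det_2)
  moreover have "hmat x a d \<in> Hsub"
    using pos by (rule hmat_in_Hsub)
  moreover have "aff (t, A) ** k = k ** hmat x a d"
    using eigen \<tau> unfolding k_def
    by (simp add: vec_eq_iff forall_3 matrix_matrix_mult_def sum_3 hmat_nth aff_nth x_def
        algebra_simps)
  ultimately show ?thesis by blast
qed

lemma aff_conj_into_Hsub_distinct_pos_eigenvalues: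
  fixes t :: "real^2" and A :: "real^2^2"
  assumes q: "A$1$2 > 0" and det: "det A > 0" and trace: "A$1$1 + A$2$2 > 0"
    and disc: "(A$1$1 - A$2$2)^2 + 4 * A$1$2 * A$2$1 > 0"
  shows "\<exists>k\<in>Gaff. \<exists>h\<in>Hsub. aff (t, A) ** k = k ** h"
proof -
  define p q r s where "p = A$1$1" "q = A$1$2" "r = A$2$1" "s = A$2$2"
  define \<delta> where "\<delta> = sqrt ((p - s)^2 + 4 * q * r)"
  define l1 l2 where "l1 = (p + s - \<delta>) / 2" "l2 = (p + s + \<delta>) / 2"
  have \<delta>: "\<delta> > 0" "\<delta>^2 = (p - s)^2 + 4 * q * r"
    using disc unfolding \<delta>_def p_q_r_s_def by simp_all
  have "\<delta>^2 < (p + s)^2"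
    using \<delta>(2) det unfolding p_q_r_s_def det_2 by (simp add: power2_eq_square algebra_simps)
  then have "\<delta> < p + s"
    using trace unfolding p_q_r_s_def by (auto intro: power_less_imp_less_base)
  then have l: "0 < l1" "l1 < l2"
    using \<delta>(1) unfolding l1_l2_def by auto
  define v where "v l = (\<chi> i. if i = 1 then q else l - p :: real^2)" for l
  have eigen: "A *v v l = l *\<^sub>R v l" if "l = l1 \<or> l = l2" for l
  proof -
    have "p + s - 2 * l = \<delta> \<or> p + s - 2 * l = - \<delta>"
      using that unfolding l1_l2_def by auto
    then have "(p + s - 2 * l)^2 = \<delta>^2"
      by auto
    then have "r * q + s * (l - p) = l * (l - p)"
      using \<delta>(2) by (simp add: power2_eq_square algebra_simps)
    then show ?thesis
      unfolding v_def p_q_r_s_def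
      by (simp add: vec_eq_iff forall_2 matrix_vector_mult_def sum_2 algebra_simps)
  qed
  have "q > 0" using q unfolding p_q_r_s_def .
  txt \<open>At most one eigenvalue is 1; it goes first, its eigenvector negated to keep the
    orientation.\<close>
  show ?thesis
  proof (cases "l2 = 1")
    case False
    have "(v l1)$1 * (v l2)$2 - (v l2)$1 * (v l1)$2 > 0"
      using \<open>q > 0\<close> l unfolding v_def by (simp add: algebra_simps)
    with eigen False l show ?thesis
      by (intro aff_conj_into_Hsub_eigenbasis[of A "v l1" l1 "v l2" l2]) auto
  next
    case True
    have "(- v l2)$1 * (v l1)$2 - (v l1)$1 * (- v l2)$2 > 0"
      using \<open>q > 0\<close> l unfolding v_def by (simp add: algebra_simps)
    with eigen True l show ?thesis
      by (intro aff_conj_into_Hsub_eigenbasis[of A "- v l2" l2 "v l1" l1])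
        (auto simp: linear_neg[OF matrix_vector_mul_linear])
  qed
qed

lemma Gaff_conj_into_Hsub:
  assumes "g \<in> Gaff" "g$2$3 > 0" "g$2$2 + g$3$3 > 0"
    "(g$2$2 - g$3$3)^2 + 4 * g$2$3 * g$3$2 > 0"
  shows "\<exists>k\<in>Gaff. \<exists>h\<in>Hsub. g ** k = k ** h"
proof -
  obtain t A where g: "g = aff (t, A)" and "det A > 0"
    using assms(1) unfolding Gaff_def Upar_def by auto
  with assms(2-4) show ?thesis
    unfolding g by (intro aff_conj_into_Hsub_distinct_pos_eigenvalues) (simp_all add: aff_nth)
qed

lemma tendsto_difference_quotient:
  fixes \<gamma> :: "real \<Rightarrow> 'a::real_normed_vector"
  assumes "(\<gamma> has_derivative (\<lambda>e. e *\<^sub>R X)) (at 0)"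
  shows "((\<lambda>e. (\<gamma> e - \<gamma> 0) /\<^sub>R e) \<longlongrightarrow> X) (at 0)"
proof -
  have "(\<lambda>h. norm (\<gamma> h - \<gamma> 0 - h *\<^sub>R X) / norm h) \<midarrow>0\<rightarrow> 0"
    using assms by (simp add: has_derivative_at)
  moreover have "norm (\<gamma> h - \<gamma> 0 - h *\<^sub>R X) / norm h = norm ((\<gamma> h - \<gamma> 0) /\<^sub>R h - X)"
    if "h \<noteq> 0" for h
  proof -
    have "\<gamma> h - \<gamma> 0 - h *\<^sub>R X = h *\<^sub>R ((\<gamma> h - \<gamma> 0) /\<^sub>R h - X)"
      using that by (simp add: algebra_simps)
    then show ?thesis using that by simp
  qed
  ultimately have "(\<lambda>h. norm ((\<gamma> h - \<gamma> 0) /\<^sub>R h - X)) \<midarrow>0\<rightarrow> 0"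
    by (rule Lim_transform_within[OF _ zero_less_one]) auto
  then show ?thesis
    by (simp add: tendsto_norm_zero_iff LIM_zero_iff)
qed

text \<open>The first and last conditions are homogeneous of degree 1 and 2 in \<open>\<gamma> e - 1\<close>, so they are
  inherited from the tangent vector \<open>X\<close>; the trace tends to 2.\<close>

lemma eventually_distinct_real_eigenvalues:
  fixes \<gamma> :: "real \<Rightarrow> mat3"
  assumes "\<gamma> 0 = mat 1" and "(\<gamma> has_derivative (\<lambda>e. e *\<^sub>R X)) (at 0)"
    and X: "X$2$3 > 0" "(X$2$2 - X$3$3)^2 + 4 * X$2$3 * X$3$2 > 0"
  shows "\<forall>\<^sub>F e in at_right 0. \<gamma> e$2$3 > 0 \<and> \<gamma> e$2$2 + \<gamma> e$3$3 > 0
           \<and> (\<gamma> e$2$2 - \<gamma> e$3$3)^2 + 4 * \<gamma> e$2$3 * \<gamma> e$3$2 > 0"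
proof -
  define D where "D e = (\<gamma> e - mat 1) /\<^sub>R e" for e
  have entry: "((\<lambda>e. D e $ i $ j) \<longlongrightarrow> X $ i $ j) (at 0)" for i j
    using tendsto_difference_quotient[OF assms(2)] assms(1) unfolding D_def
    by (intro tendsto_vec_nth) simp
  have \<gamma>: "\<gamma> e $ i $ j = mat 1 $ i $ j + e * D e $ i $ j" if "e \<noteq> 0" for e i j
    using that unfolding D_def by (simp add: field_simps)
  have "\<forall>\<^sub>F e in at 0. D e$2$3 > 0"
    using entry X(1) by (rule order_tendstoD)
  moreover have "((\<lambda>e. (D e$2$2 - D e$3$3)^2 + 4 * D e$2$3 * D e$3$2)
      \<longlongrightarrow> (X$2$2 - X$3$3)^2 + 4 * X$2$3 * X$3$2) (at 0)"
    by (intro tendsto_intros entry)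
  then have "\<forall>\<^sub>F e in at 0. (D e$2$2 - D e$3$3)^2 + 4 * D e$2$3 * D e$3$2 > 0"
    using X(2) by (rule order_tendstoD)
  moreover have "((\<lambda>e. 2 + e * (D e$2$2 + D e$3$3)) \<longlongrightarrow> 2 + 0 * (X$2$2 + X$3$3)) (at 0)"
    by (intro tendsto_intros entry)
  then have "\<forall>\<^sub>F e in at 0. 2 + e * (D e$2$2 + D e$3$3) > 0"
    by (rule order_tendstoD) simp
  ultimately have "\<forall>\<^sub>F e in at 0. D e$2$3 > 0
      \<and> (D e$2$2 - D e$3$3)^2 + 4 * D e$2$3 * D e$3$2 > 0 \<and> 2 + e * (D e$2$2 + D e$3$3) > 0"
    by (intro eventually_conj)
  then have "\<forall>\<^sub>F e in at_right 0. D e$2$3 > 0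
      \<and> (D e$2$2 - D e$3$3)^2 + 4 * D e$2$3 * D e$3$2 > 0 \<and> 2 + e * (D e$2$2 + D e$3$3) > 0"
    unfolding eventually_at_split by blast
  moreover have "\<forall>\<^sub>F e in at_right 0. (0::real) < e"
    by (rule eventually_at_right_less)
  ultimately show ?thesis
  proof eventually_elim
    case (elim e)
    then have "\<gamma> e$2$3 = e * D e$2$3" "\<gamma> e$2$2 + \<gamma> e$3$3 = 2 + e * (D e$2$2 + D e$3$3)"
      "(\<gamma> e$2$2 - \<gamma> e$3$3)^2 + 4 * \<gamma> e$2$3 * \<gamma> e$3$2
        = e^2 * ((D e$2$2 - D e$3$3)^2 + 4 * D e$2$3 * D e$3$2)"
      using \<gamma>[of e] by (simp_all add: mat_def power2_eq_square algebra_simps)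
    with elim show ?case
      by simp
  qed
qed

lemma section_curve_with_tangent:
  assumes st: "sharply_transitive_section \<sigma>" and diff: "almost_differentiable \<sigma>"
    and X: "X \<in> tangent_at_1 \<sigma>"
  obtains \<gamma> where "\<gamma> 0 = mat 1" "(\<gamma> has_derivative (\<lambda>e. e *\<^sub>R X)) (at 0)"
    "\<forall>\<^sub>F e in at 0. \<gamma> e \<in> \<sigma> ` cosets"
proof -
  define p0 where "p0 = (0 :: real^2, mat 1 :: real^2^2)"
  define D where "D = frechet_derivative (sec_chart \<sigma>) (at p0)"
  have "p0 \<in> Upar"
    unfolding p0_def Upar_def by simp
  then have D: "(sec_chart \<sigma> has_derivative D) (at p0)"
    using diff unfolding almost_differentiable_def D_def by (simp add: frechet_derivative_works)
  obtain v where "D v = X"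
    using X unfolding tangent_at_1_def D_def p0_def by blast
  define \<gamma> where "\<gamma> e = sec_chart \<sigma> (p0 + e *\<^sub>R v)" for e :: real
  have "\<gamma> 0 = \<sigma> (lcoset (aff p0))"
    unfolding \<gamma>_def sec_chart_def by simp
  also have "\<dots> = mat 1"
    using st unfolding p0_def aff_zero_one lcoset_one sharply_transitive_section_def by blast
  finally have "\<gamma> 0 = mat 1" .
  moreover have "(\<gamma> has_derivative (\<lambda>e. e *\<^sub>R X)) (at 0)"
  proof -
    have "((\<lambda>e::real. p0 + e *\<^sub>R v) has_derivative (\<lambda>e. e *\<^sub>R v)) (at 0)"
      by (auto intro!: derivative_eq_intros)
    from has_derivative_compose[OF this] D
    have "(\<gamma> has_derivative (\<lambda>e. D (e *\<^sub>R v))) (at 0)"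
      unfolding \<gamma>_def by simp
    moreover have "linear D"
      using D has_derivative_linear by blast
    ultimately show ?thesis
      using \<open>D v = X\<close> by (simp add: linear_cmul)
  qed
  moreover have "\<forall>\<^sub>F e in at 0. \<gamma> e \<in> \<sigma> ` cosets"
  proof -
    define M where "M = snd v"
    have det: "det (snd (p0 + e *\<^sub>R v))
        = (1 + e * M$1$1) * (1 + e * M$2$2) - (e * M$1$2) * (e * M$2$1)" for e
      unfolding M_def p0_def by (auto simp: det_2 mat_def)
    have "((\<lambda>e. (1 + e * M$1$1) * (1 + e * M$2$2) - (e * M$1$2) * (e * M$2$1))
        \<longlongrightarrow> (1 + 0 * M$1$1) * (1 + 0 * M$2$2) - (0 * M$1$2) * (0 * M$2$1)) (at (0::real))"
      by (intro tendsto_intros)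
    then have "\<forall>\<^sub>F e in at 0. det (snd (p0 + e *\<^sub>R v)) > 0"
      unfolding det by (rule order_tendstoD) simp
    then show ?thesis
    proof eventually_elim
      case (elim e)
      then have "p0 + e *\<^sub>R v \<in> Upar"
        unfolding Upar_def by (cases "p0 + e *\<^sub>R v") auto
      then show ?case
        unfolding \<gamma>_def sec_chart_def cosets_def Gaff_def by blast
    qed
  qed
  ultimately show thesis using that by blast
qed

theorem proposition21:
  shows "\<not> (\<exists>\<sigma>. sharply_transitive_section \<sigma> \<and> left_A_loop \<sigma> \<and> top_generates \<sigma>
              \<and> almost_differentiable \<sigma>
              \<and> tangent_at_1 \<sigma> = span {Eu 2 3, Eu 3 2, Eu 1 3})"
proof
  assume "\<exists>\<sigma>. sharply_transitive_section \<sigma> \<and> left_A_loop \<sigma> \<and> top_generates \<sigma>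
              \<and> almost_differentiable \<sigma>
              \<and> tangent_at_1 \<sigma> = span {Eu 2 3, Eu 3 2, Eu 1 3}"
  then obtain \<sigma> where st: "sharply_transitive_section \<sigma>" and diff: "almost_differentiable \<sigma>"
    and tangent: "tangent_at_1 \<sigma> = span {Eu 2 3, Eu 3 2, Eu 1 3}" by blast
  define X where "X = Eu 2 3 + Eu 3 2"
  have "X \<in> tangent_at_1 \<sigma>"
    unfolding tangent X_def by (intro span_add span_base) auto
  then obtain \<gamma> where \<gamma>: "\<gamma> 0 = mat 1" "(\<gamma> has_derivative (\<lambda>e. e *\<^sub>R X)) (at 0)"
    and in_section: "\<forall>\<^sub>F e in at 0. \<gamma> e \<in> \<sigma> ` cosets"
    using section_curve_with_tangent[OF st diff] by blast
  have "X$2$3 > 0" "(X$2$2 - X$3$3)^2 + 4 * X$2$3 * X$3$2 > 0"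
    unfolding X_def Eu_def by simp_all
  from in_section[unfolded eventually_at_split, THEN conjunct2]
    and eventually_distinct_real_eigenvalues[OF \<gamma> this]
  have "\<forall>\<^sub>F e in at_right 0. \<gamma> e \<in> \<sigma> ` cosets \<and> \<gamma> e$2$3 > 0 \<and> \<gamma> e$2$2 + \<gamma> e$3$3 > 0
      \<and> (\<gamma> e$2$2 - \<gamma> e$3$3)^2 + 4 * \<gamma> e$2$3 * \<gamma> e$3$2 > 0"
    by (rule eventually_conj)
  then obtain e where "\<gamma> e \<in> \<sigma> ` cosets" and "\<gamma> e$2$3 > 0" "\<gamma> e$2$2 + \<gamma> e$3$3 > 0"
    "(\<gamma> e$2$2 - \<gamma> e$3$3)^2 + 4 * \<gamma> e$2$3 * \<gamma> e$3$2 > 0"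
    using eventually_happens'[OF trivial_limit_at_right_real] by blast
  moreover obtain c where c: "c \<in> cosets" and "\<sigma> c = \<gamma> e"
    using \<open>\<gamma> e \<in> \<sigma> ` cosets\<close> by (metis imageE)
  ultimately have spec: "\<sigma> c$2$3 > 0" "\<sigma> c$2$2 + \<sigma> c$3$3 > 0"
    "(\<sigma> c$2$2 - \<sigma> c$3$3)^2 + 4 * \<sigma> c$2$3 * \<sigma> c$3$2 > 0"
    by simp_all
  have "\<sigma> c \<in> Gaff"
    using st c unfolding sharply_transitive_section_def by blast
  then obtain k h where "k \<in> Gaff" "h \<in> Hsub" "\<sigma> c ** k = k ** h"
    using Gaff_conj_into_Hsub spec by blast
  then have "\<sigma> c = mat 1"
    using section_conj_into_Hsub_is_one[OF st c] by blast
  with spec(1) show False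
    by (simp add: mat_def)
qed

end
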